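(* For every $n\ge1$ and every integer $k\ge0$, the set of SR states $c$ on $K_n^0$ with $\sum_{i=1}^n c_i-\binom{n}{2}=k$ equals the set of integer lattice points of the convex hull (in $\mathbb{R}^n$) of the set of DR states $c$ on $K_n^0$ with $\sum_{i=1}^n c_i-\binom{n}{2}=k$.
   Context: $K_n^0$ is the complete graph on vertex set $\{0,1,\dots,n\}$ with sink $0$; every vertex has degree $n$. A configuration is $c\in\mathbb{Z}_{\ge0}^n$, stable if $c_i\le n-1$ for all $i$. ASM: an unstable vertex topples by sending one grain to each neighbour (grains to the sink disappear). SSM (parameter $p\in(0,1)$): an unstable vertex $i$, independently for each incident edge, sends one grain along it with probability $p$, otherwise keeps it. Each model gives a Markov chain on stable configurations: add a grain at vertex $i$ with probability $\mu_i>0$, then stabilise. DR = recurrent for the ASM chain, SR = recurrent for the SSM chain. The quantity $\sum_i c_i-\binom n2$ is the level of $c$. *)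

theory Defs
  imports "HOL-Analysis.Analysis"
begin

text \<open>The non-sink vertices of K_n^0 are the elements of a finite type 'n
  with n = CARD('n) (so n \<ge> 1 automatically); the sink is not represented.
  Every non-sink vertex i is adjacent to the sink and to all j \<noteq> i, so has
  degree n.\<close>

definition stable :: "('n::finite \<Rightarrow> nat) \<Rightarrow> bool" where
  "stable c \<longleftrightarrow> (\<forall>i. c i \<le> CARD('n) - 1)"

definition level :: "('n::finite \<Rightarrow> nat) \<Rightarrow> int" where
  "level c = int (\<Sum>i\<in>UNIV. c i) - int (CARD('n) choose 2)"

definition add_grain :: "'n \<Rightarrow> ('n \<Rightarrow> nat) \<Rightarrow> ('n \<Rightarrow> nat)" where
  "add_grain i c = c(i := c i + 1)"

definition asm_topple :: "'n::finite \<Rightarrow> ('n \<Rightarrow> nat) \<Rightarrow> ('n \<Rightarrow> nat) \<Rightarrow> bool" where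
  "asm_topple i c c' \<longleftrightarrow> CARD('n) \<le> c i \<and>
     c' = (\<lambda>j. if j = i then c i - CARD('n) else c j + 1)"

text \<open>SSM toppling of the unstable vertex i: the set of edges along which a grain
  is sent consists of the edge to the sink (if b) and the edges to the vertices in S;
  this choice has probability p^m (1-p)^(n-m), m = number of chosen edges, and
  only choices of positive probability are possible outcomes.\<close>
definition ssm_topple :: "real \<Rightarrow> 'n::finite \<Rightarrow> ('n \<Rightarrow> nat) \<Rightarrow> ('n \<Rightarrow> nat) \<Rightarrow> bool" where
  "ssm_topple p i c c' \<longleftrightarrow> CARD('n) \<le> c i \<and>
     (\<exists>(b::bool) (S::'n set). i \<notin> S \<and>
        (let m = card S + (if b then 1 else 0) in
          p ^ m * (1 - p) ^ (CARD('n) - m) > 0 \<and>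
          c' = (\<lambda>j. if j = i then c i - m else if j \<in> S then c j + 1 else c j)))"

definition asm_stab :: "('n::finite \<Rightarrow> nat) \<Rightarrow> ('n \<Rightarrow> nat) \<Rightarrow> bool" where
  "asm_stab c c' \<longleftrightarrow> (\<lambda>x y. \<exists>i. asm_topple i x y)\<^sup>*\<^sup>* c c' \<and> stable c'"

definition ssm_stab :: "real \<Rightarrow> ('n::finite \<Rightarrow> nat) \<Rightarrow> ('n \<Rightarrow> nat) \<Rightarrow> bool" where
  "ssm_stab p c c' \<longleftrightarrow> (\<lambda>x y. \<exists>i. ssm_topple p i x y)\<^sup>*\<^sup>* c c' \<and> stable c'"

text \<open>Transitions of positive probability of the Markov chains on stable
  configurations (add a grain at i with probability \<mu> i, then stabilise).\<close>
definition asm_trans :: "('n::finite \<Rightarrow> real) \<Rightarrow> ('n \<Rightarrow> nat) \<Rightarrow> ('n \<Rightarrow> nat) \<Rightarrow> bool" where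
  "asm_trans \<mu> c c' \<longleftrightarrow> stable c \<and> (\<exists>i. \<mu> i > 0 \<and> asm_stab (add_grain i c) c')"

definition ssm_trans :: "real \<Rightarrow> ('n::finite \<Rightarrow> real) \<Rightarrow> ('n \<Rightarrow> nat) \<Rightarrow> ('n \<Rightarrow> nat) \<Rightarrow> bool" where
  "ssm_trans p \<mu> c c' \<longleftrightarrow> stable c \<and> (\<exists>i. \<mu> i > 0 \<and> ssm_stab p (add_grain i c) c')"

text \<open>Recurrence for a finite-state Markov chain, given by its graph of
  positive-probability transitions: every state reachable from c leads back to c.\<close>
definition recurrent :: "('a \<Rightarrow> 'a \<Rightarrow> bool) \<Rightarrow> 'a \<Rightarrow> bool" where
  "recurrent T c \<longleftrightarrow> (\<forall>d. T\<^sup>*\<^sup>* c d \<longrightarrow> T\<^sup>*\<^sup>* d c)"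

definition DR :: "('n::finite \<Rightarrow> real) \<Rightarrow> ('n \<Rightarrow> nat) \<Rightarrow> bool" where
  "DR \<mu> c \<longleftrightarrow> stable c \<and> recurrent (asm_trans \<mu>) c"

definition SR :: "real \<Rightarrow> ('n::finite \<Rightarrow> real) \<Rightarrow> ('n \<Rightarrow> nat) \<Rightarrow> bool" where
  "SR p \<mu> c \<longleftrightarrow> stable c \<and> recurrent (ssm_trans p \<mu>) c"

definition to_vec :: "('n::finite \<Rightarrow> nat) \<Rightarrow> real ^ 'n" where
  "to_vec c = (\<chi> i. real (c i))"

end

theory Submission
  imports Defs "HOL-Library.Confluence"
begin

text \<open>Both chains can move from any stable configuration to the maximal stable
  configuration m = (n-1, ..., n-1), so a stable configuration is recurrent iff it is
  reachable from m. SSM topplings preserve the inequalities sum_{i in A} c_i >= C(|A|, 2)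
  for all sets A of vertices, which m satisfies; conversely every stable c satisfying
  them is reachable from m, because it has an SSM predecessor with the same property
  and a strictly larger sum of squares. So the SR states of level k are exactly the
  lattice points of the polytope given by these inequalities, 0 <= c_i <= n-1 and
  sum_i c_i = C(n, 2) + k. DR states are SR states, so their convex hull lies in this
  polytope. Conversely, if such a c has a forbidden subconfiguration in Dhar's sense,
  moving one grain between the two fullest vertices u, v of the forbidden set, and
  additionally swapping u and v, gives two such configurations of the same level with a
  larger sum of squares, and c lies on the segment between them. By induction every SR
  state lies in the convex hull of the stable configurations without forbidden
  subconfigurations, which are DR by the burning algorithm.\<close>

section \<open>Stabilisation in the abelian sandpile model\<close>

abbreviation asm_step :: "('n::finite \<Rightarrow> nat) \<Rightarrow> ('n \<Rightarrow> nat) \<Rightarrow> bool" where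
  "asm_step \<equiv> \<lambda>c c'. \<exists>i. asm_topple i c c'"

lemma unstable_vertex:
  fixes c :: "'n::finite \<Rightarrow> nat"
  assumes "\<not> stable c"
  obtains i where "CARD('n) \<le> c i"
proof -
  from assms obtain i where "\<not> c i \<le> CARD('n) - 1" by (auto simp: stable_def)
  then have "CARD('n) \<le> c i" using zero_less_card_finite[where 'a='n] by linarith
  with that show ?thesis .
qed

lemma stable_no_asm_topple:
  fixes c :: "'n::finite \<Rightarrow> nat"
  assumes "stable c"
  shows "\<not> asm_topple i c c'"
proof
  assume "asm_topple i c c'"
  then have "CARD('n) \<le> c i" by (simp add: asm_topple_def)
  moreover have "c i \<le> CARD('n) - 1" using assms by (simp add: stable_def)
  ultimately show False using zero_less_card_finite[where 'a='n] by linarith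
qed

lemma stable_asm_steps_eq: "asm_step\<^sup>*\<^sup>* s u \<Longrightarrow> stable s \<Longrightarrow> u = s"
  by (induction rule: converse_rtranclp_induct) (auto dest: stable_no_asm_topple)

lemma sum_asm_topple:
  fixes c :: "'n::finite \<Rightarrow> nat"
  assumes "asm_topple i c c'"
  shows "sum c' UNIV + 1 = sum c UNIV"
proof -
  have pointwise: "c' j + (if j = i then CARD('n) else 0) = c j + (if j = i then 0 else 1)" for j
    using assms by (auto simp: asm_topple_def)
  then have "(\<Sum>j\<in>UNIV. c' j + (if j = i then CARD('n) else 0))
      = (\<Sum>j\<in>UNIV. c j + (if j = i then 0 else 1))"
    by (simp only: pointwise)
  then have "sum c' UNIV + CARD('n) = sum c UNIV + card (UNIV - {i})"
    by (simp add: sum.distrib sum.If_cases Compl_eq_Diff_UNIV)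
  moreover have "card (UNIV - {i}) = CARD('n) - 1" by (simp add: card_Diff_singleton)
  ultimately show ?thesis using zero_less_card_finite[where 'a='n] by linarith
qed

lemma asm_topple_rtranclp: "asm_topple i c c' \<Longrightarrow> asm_step\<^sup>*\<^sup>* c' d \<Longrightarrow> asm_step\<^sup>*\<^sup>* c d"
  using converse_rtranclp_into_rtranclp[of asm_step c c' d] by blast

lemma asm_stab_exists:
  fixes c :: "'n::finite \<Rightarrow> nat"
  shows "\<exists>s. asm_stab c s"
proof (induction "sum c UNIV" arbitrary: c rule: less_induct)
  case less
  show ?case
  proof (cases "stable c")
    case True
    then show ?thesis by (auto simp: asm_stab_def)
  next
    case False
    then obtain i where i: "CARD('n) \<le> c i" by (rule unstable_vertex)
    define c' where "c' = (\<lambda>j. if j = i then c i - CARD('n) else c j + 1)"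
    have topple: "asm_topple i c c'" using i by (simp add: asm_topple_def c'_def)
    then obtain s where "asm_stab c' s"
      using less sum_asm_topple[OF topple] by fastforce
    with topple have "asm_stab c s" by (auto simp: asm_stab_def intro: asm_topple_rtranclp)
    then show ?thesis by blast
  qed
qed

lemma asm_step_strong_confluent: "strong_confluentp asm_step"
proof
  fix c c1 c2 :: "'n::finite \<Rightarrow> nat"
  assume "asm_step c c1" "asm_step c c2"
  then obtain i j where i: "asm_topple i c c1" and j: "asm_topple j c c2" by blast
  show "\<exists>u. asm_step\<^sup>*\<^sup>* c1 u \<and> asm_step\<^sup>=\<^sup>= c2 u"
  proof (cases "i = j")
    case True
    with i j show ?thesis by (auto simp: asm_topple_def)
  next
    case False
    define c12 where "c12 = (\<lambda>w. if w = i then c i - CARD('n) + 1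
      else if w = j then c j - CARD('n) + 1 else c w + 2)"
    have "asm_topple j c1 c12" "asm_topple i c2 c12"
      using False i j by (auto simp: asm_topple_def c12_def fun_eq_iff)
    then show ?thesis by blast
  qed
qed

lemma asm_stab_unique:
  assumes "asm_stab c s1" "asm_stab c s2"
  shows "s1 = s2"
proof -
  obtain u where "asm_step\<^sup>*\<^sup>* s1 u" "asm_step\<^sup>*\<^sup>* s2 u"
    using assms confluentpD[OF strong_confluentp_imp_confluentp[OF asm_step_strong_confluent]]
    unfolding asm_stab_def by blast
  with assms show ?thesis unfolding asm_stab_def by (metis stable_asm_steps_eq)
qed

lemma asm_topple_add:
  "asm_topple i c c' \<Longrightarrow> asm_topple i (\<lambda>w. c w + e w) (\<lambda>w. c' w + e w)"
  by (auto simp: asm_topple_def fun_eq_iff)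

lemma asm_steps_add:
  "asm_step\<^sup>*\<^sup>* c c' \<Longrightarrow> asm_step\<^sup>*\<^sup>* (\<lambda>w. c w + e w) (\<lambda>w. c' w + e w)"
  by (induction rule: rtranclp_induct) (auto intro: rtranclp.rtrancl_into_rtrancl asm_topple_add)

section \<open>Recurrence through the maximal stable configuration\<close>

definition max_stable :: "'n::finite \<Rightarrow> nat" where
  "max_stable = (\<lambda>_. CARD('n) - 1)"

lemma stable_max_stable: "stable max_stable"
  by (simp add: stable_def max_stable_def)

lemma recurrent_iff_reachable_from:
  assumes "\<And>d. T\<^sup>*\<^sup>* c d \<Longrightarrow> T\<^sup>*\<^sup>* d m"
  shows "recurrent T c \<longleftrightarrow> T\<^sup>*\<^sup>* m c"
  using assms unfolding recurrent_def by (meson rtranclp.rtrancl_refl rtranclp_trans)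

lemma asm_trans_stable: "(asm_trans \<mu>)\<^sup>*\<^sup>* c d \<Longrightarrow> stable c \<Longrightarrow> stable d"
  by (induction rule: rtranclp_induct) (auto simp: asm_trans_def asm_stab_def)

lemma asm_trans_reaches_max_stable:
  fixes c :: "'n::finite \<Rightarrow> nat"
  assumes \<mu>: "\<forall>i. 0 < \<mu> i"
  shows "stable c \<Longrightarrow> (asm_trans \<mu>)\<^sup>*\<^sup>* c max_stable"
proof (induction "\<Sum>w\<in>UNIV. CARD('n) - 1 - c w" arbitrary: c rule: less_induct)
  case less
  show ?case
  proof (cases "c = max_stable")
    case False
    then obtain i where i: "c i < CARD('n) - 1"
      using less.prems by (force simp: stable_def max_stable_def le_less)
    have stable': "stable (add_grain i c)"
      using less.prems i by (auto simp: stable_def add_grain_def)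
    have "asm_trans \<mu> c (add_grain i c)"
      using less.prems stable' \<mu> by (auto simp: asm_trans_def asm_stab_def)
    moreover have "(\<Sum>w\<in>UNIV. CARD('n) - 1 - add_grain i c w) < (\<Sum>w\<in>UNIV. CARD('n) - 1 - c w)"
      using i by (intro sum_strict_mono_ex1) (auto simp: add_grain_def)
    ultimately show ?thesis
      using less.hyps stable' by (meson converse_rtranclp_into_rtranclp)
  qed simp
qed

lemma DR_iff_reachable:
  assumes "\<forall>i. 0 < \<mu> i"
  shows "DR \<mu> c \<longleftrightarrow> stable c \<and> (asm_trans \<mu>)\<^sup>*\<^sup>* max_stable c"
  using recurrent_iff_reachable_from[of "asm_trans \<mu>" c max_stable]
    asm_trans_stable asm_trans_reaches_max_stable[OF assms]
  unfolding DR_def by blast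

lemma add_grain_conv: "add_grain i c = (\<lambda>w. c w + (if w = i then 1 else 0))"
  by (auto simp: add_grain_def)

text \<open>By the abelian property, stabilising max_stable + e one grain at a time is a
  run of the ASM chain.\<close>
lemma asm_trans_reaches_stabilisation:
  fixes e :: "'n::finite \<Rightarrow> nat"
  assumes \<mu>: "\<forall>i. 0 < \<mu> i"
  shows "asm_stab (\<lambda>w. max_stable w + e w) s \<Longrightarrow> (asm_trans \<mu>)\<^sup>*\<^sup>* max_stable s"
proof (induction "sum e UNIV" arbitrary: e s)
  case 0
  then have "(\<lambda>w. max_stable w + e w) = max_stable" by (simp add: fun_eq_iff)
  moreover have "asm_stab max_stable max_stable"
    by (simp add: asm_stab_def stable_max_stable)
  ultimately have "s = max_stable" using "0.prems" asm_stab_unique by metis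
  then show ?case by simp
next
  case (Suc k)
  then obtain i where "0 < e i" by (metis sum.neutral neq0_conv nat.distinct(1))
  define e' where "e' = e(i := e i - 1)"
  have e: "(\<lambda>w. max_stable w + e w) = add_grain i (\<lambda>w. max_stable w + e' w)"
    using \<open>0 < e i\<close> by (auto simp: e'_def add_grain_def)
  have "sum e UNIV = sum e' UNIV + 1"
    using \<open>0 < e i\<close> sum.remove[of UNIV i e] sum.remove[of UNIV i e'] by (simp add: e'_def)
  with Suc.hyps(2) have k: "k = sum e' UNIV" by simp
  obtain s' where s': "asm_stab (\<lambda>w. max_stable w + e' w) s'" using asm_stab_exists by blast
  obtain s'' where s'': "asm_stab (add_grain i s') s''" using asm_stab_exists by blast
  have "asm_trans \<mu> s' s''"
    using \<mu> s' s'' by (auto simp: asm_trans_def asm_stab_def)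
  moreover have "(asm_trans \<mu>)\<^sup>*\<^sup>* max_stable s'" using Suc.hyps(1)[OF k s'] .
  moreover have "asm_stab (\<lambda>w. max_stable w + e w) s''"
  proof -
    have "asm_step\<^sup>*\<^sup>* (\<lambda>w. max_stable w + e' w) s'" using s' by (simp add: asm_stab_def)
    then have "asm_step\<^sup>*\<^sup>* (\<lambda>w. max_stable w + e w) (add_grain i s')"
      unfolding e add_grain_conv by (rule asm_steps_add)
    with s'' show ?thesis unfolding asm_stab_def by (meson rtranclp_trans)
  qed
  then have "s'' = s" using Suc.prems asm_stab_unique by blast
  ultimately show ?case by (meson rtranclp.rtrancl_into_rtrancl)
qed

section \<open>Dhar's burning criterion\<close>

text \<open>A forbidden subconfiguration is a nonempty set A in which every vertex holds fewer
  grains than its |A| - 1 neighbours in A.\<close>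
definition no_forbidden_subconfig :: "('n::finite \<Rightarrow> nat) \<Rightarrow> bool" where
  "no_forbidden_subconfig c \<longleftrightarrow> (\<forall>A. A \<noteq> {} \<longrightarrow> (\<exists>w\<in>A. card A \<le> c w + 1))"

text \<open>Toppling, starting from y + 1, each vertex of D once: the vertices of D become
  y - (n - |D|), the others y + 1 + |D|; by the criterion some further vertex is unstable.\<close>
lemma asm_steps_burning:
  fixes y :: "'n::finite \<Rightarrow> nat"
  assumes y: "no_forbidden_subconfig y"
  shows "\<forall>w\<in>D. CARD('n) \<le> y w + card D \<Longrightarrow>
    asm_step\<^sup>*\<^sup>* (\<lambda>w. if w \<in> D then y w + card D - CARD('n) else y w + 1 + card D) y"
proof (induction "CARD('n) - card D" arbitrary: D rule: less_induct)
  case less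
  show ?case
  proof (cases "D = UNIV")
    case False
    then have "UNIV - D \<noteq> {}" by auto
    then obtain w where w: "w \<in> UNIV - D" "card (UNIV - D) \<le> y w + 1"
      using y[unfolded no_forbidden_subconfig_def, rule_format, of "UNIV - D"] by blast
    have card_rest: "card (UNIV - D) = CARD('n) - card D" by (simp add: card_Diff_subset)
    have card_D: "card D < CARD('n)" using False by (intro psubset_card_mono) auto
    have card_insert: "card (insert w D) = card D + 1" using w by simp
    have "asm_topple w (\<lambda>u. if u \<in> D then y u + card D - CARD('n) else y u + 1 + card D)
        (\<lambda>u. if u \<in> insert w D then y u + card (insert w D) - CARD('n) else y u + 1 + card (insert w D))"
      using w less.prems card_rest card_insert by (auto simp: asm_topple_def fun_eq_iff)
    moreover have "asm_step\<^sup>*\<^sup>*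
        (\<lambda>u. if u \<in> insert w D then y u + card (insert w D) - CARD('n) else y u + 1 + card (insert w D)) y"
      using less.prems w card_rest card_insert card_D by (intro less.hyps) auto
    ultimately show ?thesis by (rule asm_topple_rtranclp)
  qed simp
qed

lemma asm_steps_add_const:
  fixes y :: "'n::finite \<Rightarrow> nat"
  assumes y: "no_forbidden_subconfig y"
  shows "asm_step\<^sup>*\<^sup>* (\<lambda>w. y w + k) y"
proof (induction k)
  case (Suc k)
  have "asm_step\<^sup>*\<^sup>* (\<lambda>w. y w + 1) y" using asm_steps_burning[OF y, of "{}"] by simp
  then have "asm_step\<^sup>*\<^sup>* (\<lambda>w. y w + 1 + k) (\<lambda>w. y w + k)" by (rule asm_steps_add)
  with Suc show ?case by simp
qed simp

lemma DR_if_no_forbidden_subconfig: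
  fixes y :: "'n::finite \<Rightarrow> nat"
  assumes \<mu>: "\<forall>i. 0 < \<mu> i" and "stable y" "no_forbidden_subconfig y"
  shows "DR \<mu> y"
proof -
  have max_plus_y: "(\<lambda>w. max_stable w + y w) = (\<lambda>w. y w + (CARD('n) - 1))"
    by (simp add: max_stable_def add.commute)
  have "asm_step\<^sup>*\<^sup>* (\<lambda>w. max_stable w + y w) y"
    unfolding max_plus_y by (rule asm_steps_add_const[OF assms(3)])
  then have "asm_stab (\<lambda>w. max_stable w + y w) y"
    using assms(2) by (simp add: asm_stab_def)
  then show ?thesis
    using assms asm_trans_reaches_stabilisation DR_iff_reachable by blast
qed

section \<open>The subset-sum characterisation of SR states\<close>

abbreviation ssm_step :: "real \<Rightarrow> ('n::finite \<Rightarrow> nat) \<Rightarrow> ('n \<Rightarrow> nat) \<Rightarrow> bool" where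
  "ssm_step p \<equiv> \<lambda>c c'. \<exists>i. ssm_topple p i c c'"

lemma ssm_toppleI:
  fixes c :: "'n::finite \<Rightarrow> nat"
  assumes "0 < p" "p < 1" "CARD('n) \<le> c i" "i \<notin> S"
  shows "ssm_topple p i c
    (\<lambda>j. if j = i then c i - (card S + 1) else if j \<in> S then c j + 1 else c j)"
  unfolding ssm_topple_def Let_def using assms by (intro conjI exI[of _ True] exI[of _ S]) auto

lemma ssm_topple_rtranclp:
  "ssm_topple p i c c' \<Longrightarrow> (ssm_step p)\<^sup>*\<^sup>* c' d \<Longrightarrow> (ssm_step p)\<^sup>*\<^sup>* c d"
  using converse_rtranclp_into_rtranclp[of "ssm_step p" c c' d] by blast

lemma rtranclp_ssm_topple:
  "(ssm_step p)\<^sup>*\<^sup>* c c' \<Longrightarrow> ssm_topple p i c' d \<Longrightarrow> (ssm_step p)\<^sup>*\<^sup>* c d"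
  using rtranclp.rtrancl_into_rtrancl[of "ssm_step p" c c' d] by blast

lemma asm_topple_imp_ssm_topple:
  fixes c :: "'n::finite \<Rightarrow> nat"
  assumes "0 < p" "p < 1" "asm_topple i c c'"
  shows "ssm_topple p i c c'"
proof -
  have ci: "CARD('n) \<le> c i" and c': "c' = (\<lambda>j. if j = i then c i - CARD('n) else c j + 1)"
    using assms(3) by (auto simp: asm_topple_def)
  have "card (UNIV - {i}) + 1 = CARD('n)"
    using zero_less_card_finite[where 'a='n] by (simp add: card_Diff_singleton)
  then have "(\<lambda>j. if j = i then c i - (card (UNIV - {i}) + 1) else if j \<in> UNIV - {i} then c j + 1 else c j)
      = c'"
    by (auto simp: c')
  moreover have "ssm_topple p i c
      (\<lambda>j. if j = i then c i - (card (UNIV - {i}) + 1) else if j \<in> UNIV - {i} then c j + 1 else c j)"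
    using assms(1,2) ci by (intro ssm_toppleI) auto
  ultimately show ?thesis by simp
qed

lemma asm_trans_imp_ssm_trans:
  assumes "0 < p" "p < 1" "(asm_trans \<mu>)\<^sup>*\<^sup>* c d"
  shows "(ssm_trans p \<mu>)\<^sup>*\<^sup>* c d"
proof -
  have "asm_stab c' d' \<Longrightarrow> ssm_stab p c' d'" for c' d'
    using rtranclp_mono[of asm_step "ssm_step p"] asm_topple_imp_ssm_topple[OF assms(1,2)]
    unfolding asm_stab_def ssm_stab_def by blast
  then have "asm_trans \<mu> \<le> ssm_trans p \<mu>"
    unfolding asm_trans_def ssm_trans_def by blast
  then show ?thesis using assms(3) rtranclp_mono by blast
qed

lemma ssm_trans_stable: "(ssm_trans p \<mu>)\<^sup>*\<^sup>* c d \<Longrightarrow> stable c \<Longrightarrow> stable d"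
  by (induction rule: rtranclp_induct) (auto simp: ssm_trans_def ssm_stab_def)

lemma SR_iff_reachable:
  assumes "0 < p" "p < 1" "\<forall>i. 0 < \<mu> i"
  shows "SR p \<mu> c \<longleftrightarrow> stable c \<and> (ssm_trans p \<mu>)\<^sup>*\<^sup>* max_stable c"
  using recurrent_iff_reachable_from[of "ssm_trans p \<mu>" c max_stable] ssm_trans_stable
    asm_trans_imp_ssm_trans[OF assms(1,2) asm_trans_reaches_max_stable[OF assms(3)]]
  unfolding SR_def by blast

lemma Suc_choose_two: "Suc a choose 2 = (a choose 2) + a"
  by (simp add: numeral_2_eq_2)

definition subset_sums_ge_choose2 :: "('n::finite \<Rightarrow> nat) \<Rightarrow> bool" where
  "subset_sums_ge_choose2 c \<longleftrightarrow> (\<forall>A. card A choose 2 \<le> sum c A)"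

lemma subset_sums_ge_choose2_mono:
  "subset_sums_ge_choose2 c \<Longrightarrow> (\<And>w. c w \<le> c' w) \<Longrightarrow> subset_sums_ge_choose2 c'"
  unfolding subset_sums_ge_choose2_def by (meson le_trans sum_mono)

lemma subset_sums_ge_choose2_max_stable:
  "subset_sums_ge_choose2 (max_stable :: 'n::finite \<Rightarrow> nat)"
  unfolding subset_sums_ge_choose2_def
proof
  fix A :: "'n set"
  have "card A choose 2 \<le> card A * (card A - 1)" by (simp add: choose_two)
  also have "\<dots> \<le> card A * (CARD('n) - 1)"
    by (intro mult_le_mono2 diff_le_mono card_mono) auto
  finally show "card A choose 2 \<le> sum max_stable A" by (simp add: max_stable_def)
qed

text \<open>A set A containing i loses at most the grains sent along the n + 1 - |A| edges
  from i leaving A.\<close>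
lemma sum_ssm_topple_lower_bound:
  fixes c :: "'n::finite \<Rightarrow> nat"
  assumes topple: "ssm_topple p i c c'" and "i \<in> A"
  shows "sum c A + card A \<le> sum c' A + CARD('n) + 1"
proof -
  obtain b S where ci: "CARD('n) \<le> c i" and iS: "i \<notin> S" and
    c': "c' = (\<lambda>j. if j = i then c i - (card S + (if b then 1 else 0))
                   else if j \<in> S then c j + 1 else c j)"
    using topple unfolding ssm_topple_def Let_def by blast
  define m where "m = card S + (if b then 1 else 0)"
  have "card S \<le> card (UNIV - {i})" using iS by (intro card_mono) auto
  then have "card S \<le> CARD('n) - 1" by (simp add: card_Diff_singleton)
  then have "card S + 1 \<le> CARD('n)" using zero_less_card_finite[where 'a='n] by linarith
  then have m: "m \<le> c i" using ci by (simp add: m_def)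
  have pointwise: "c' w + (if w = i then m else 0) = c w + (if w \<in> S then 1 else 0)" for w
    using m iS by (auto simp: c' m_def)
  then have "(\<Sum>w\<in>A. c' w + (if w = i then m else 0)) = (\<Sum>w\<in>A. c w + (if w \<in> S then 1 else 0))"
    by (simp only: pointwise)
  then have "sum c' A + m = sum c A + card (A \<inter> S)"
    using assms(2) by (simp add: sum.distrib sum.If_cases Int_commute)
  moreover have "card S = card (A \<inter> S) + card (S - A)"
    by (metis Int_commute card_Int_Diff finite)
  moreover have "card (S - A) \<le> card (UNIV - A)" by (rule card_mono) auto
  then have "card (S - A) + card A \<le> CARD('n)"
    using card_mono[of UNIV A] by (simp add: card_Diff_subset)
  ultimately show ?thesis by (cases b) (simp_all add: m_def)
qed

lemma subset_sums_ge_choose2_ssm_topple: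
  fixes c :: "'n::finite \<Rightarrow> nat"
  assumes c: "subset_sums_ge_choose2 c" and topple: "ssm_topple p i c c'"
  shows "subset_sums_ge_choose2 c'"
  unfolding subset_sums_ge_choose2_def
proof
  fix A :: "'n set"
  show "card A choose 2 \<le> sum c' A"
  proof (cases "i \<in> A")
    case False
    have "sum c A \<le> sum c' A"
      using topple False by (intro sum_mono) (auto simp: ssm_topple_def Let_def)
    with c show ?thesis unfolding subset_sums_ge_choose2_def by (meson le_trans)
  next
    case True
    have card_A: "card A = Suc (card (A - {i}))" using True by (metis card_Suc_Diff1 finite)
    have "card (A - {i}) choose 2 \<le> sum c (A - {i})"
      using c unfolding subset_sums_ge_choose2_def by blast
    moreover have "sum c A = c i + sum c (A - {i})" using True by (simp add: sum.remove)
    moreover have "CARD('n) \<le> c i" using topple by (simp add: ssm_topple_def)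
    ultimately show ?thesis
      using sum_ssm_topple_lower_bound[OF topple True]
      unfolding card_A Suc_choose_two by linarith
  qed
qed

lemma subset_sums_ge_choose2_ssm_trans:
  assumes "(ssm_trans p \<mu>)\<^sup>*\<^sup>* c d" "subset_sums_ge_choose2 c"
  shows "subset_sums_ge_choose2 d"
  using assms
proof (induction rule: rtranclp_induct)
  case (step d e)
  then obtain i where "(ssm_step p)\<^sup>*\<^sup>* (add_grain i d) e"
    by (auto simp: ssm_trans_def ssm_stab_def)
  moreover have "subset_sums_ge_choose2 d" using step by blast
  then have "subset_sums_ge_choose2 (add_grain i d)"
    by (rule subset_sums_ge_choose2_mono) (simp add: add_grain_def)
  ultimately show ?case
    by (induction rule: rtranclp_induct) (auto intro: subset_sums_ge_choose2_ssm_topple)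
qed

lemma DR_imp_subset_sums_ge_choose2:
  assumes "\<forall>i. 0 < \<mu> i" "DR \<mu> c"
  shows "subset_sums_ge_choose2 c"
proof -
  have "(asm_trans \<mu>)\<^sup>*\<^sup>* max_stable c" using assms DR_iff_reachable by blast
  then have "(ssm_trans (1/2) \<mu>)\<^sup>*\<^sup>* max_stable c"
    using asm_trans_imp_ssm_trans[of "1/2" \<mu> max_stable c] by simp
  then show ?thesis
    using subset_sums_ge_choose2_ssm_trans subset_sums_ge_choose2_max_stable by blast
qed

lemma ssm_steps_topple_to_sink:
  fixes c :: "'n::finite \<Rightarrow> nat"
  assumes p: "0 < p" "p < 1" and K: "\<forall>w\<in>K. c w = CARD('n)"
  shows "(ssm_step p)\<^sup>*\<^sup>* c (\<lambda>w. if w \<in> K then CARD('n) - 1 else c w)"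
proof -
  have "finite K" by simp
  then show ?thesis using K
  proof (induction K rule: finite_induct)
    case (insert k K)
    define c1 where "c1 = (\<lambda>w. if w \<in> K then CARD('n) - 1 else c w)"
    have steps: "(ssm_step p)\<^sup>*\<^sup>* c c1" using insert by (simp add: c1_def)
    have "c1 k = CARD('n)" using insert by (simp add: c1_def)
    then have "ssm_topple p k c1 (\<lambda>w. if w = k then c1 k - 1 else c1 w)"
      unfolding ssm_topple_def Let_def using p by (intro conjI exI[of _ True] exI[of _ "{}"]) auto
    with steps have "(ssm_step p)\<^sup>*\<^sup>* c (\<lambda>w. if w = k then c1 k - 1 else c1 w)"
      by (rule rtranclp_ssm_topple)
    moreover have "(\<lambda>w. if w = k then c1 k - 1 else c1 w)
        = (\<lambda>w. if w \<in> insert k K then CARD('n) - 1 else c w)"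
      using \<open>c1 k = CARD('n)\<close> insert.hyps(2) by (auto simp: fun_eq_iff c1_def)
    ultimately show ?case by simp
  qed simp
qed

lemma obtain_top_subset:
  fixes f :: "'a \<Rightarrow> 'b::linorder"
  assumes "finite W" "k \<le> card W"
  obtains T where "T \<subseteq> W" "card T = k" "\<And>g e. g \<in> T \<Longrightarrow> e \<in> W - T \<Longrightarrow> f e \<le> f g"
proof -
  have "\<exists>T\<subseteq>W. card T = k \<and> (\<forall>g\<in>T. \<forall>e\<in>W - T. f e \<le> f g)"
    using assms(2)
  proof (induction k)
    case (Suc k)
    then obtain T where T: "T \<subseteq> W" "card T = k" "\<forall>g\<in>T. \<forall>e\<in>W - T. f e \<le> f g" by auto
    have "finite T" using T(1) assms(1) finite_subset by blast
    then have "W - T \<noteq> {}" using T Suc.prems card_mono[of T W] by auto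
    then have "Max (f ` (W - T)) \<in> f ` (W - T)" using assms(1) by (intro Max_in) auto
    then obtain g where g: "g \<in> W - T" "f g = Max (f ` (W - T))" by auto
    then have "\<forall>e\<in>W - T. f e \<le> f g" using assms(1) by simp
    then show ?case
      using T g \<open>finite T\<close> by (intro exI[of _ "insert g T"]) auto
  qed (intro exI[of _ "{}"], auto)
  then show ?thesis using that by blast
qed

definition sum_sq :: "('n::finite \<Rightarrow> nat) \<Rightarrow> nat" where
  "sum_sq c = (\<Sum>w\<in>UNIV. c w ^ 2)"

locale ssm_predecessor =
  fixes x :: "'n::finite \<Rightarrow> nat" and j :: 'n and T :: "'n set"
  assumes stable: "stable x"
    and subset_sums: "subset_sums_ge_choose2 x"
    and x_j_less: "x j < CARD('n) - 1"
    and x_j_max: "\<And>w. x w < CARD('n) - 1 \<Longrightarrow> x w \<le> x j"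
    and j_notin_T: "j \<notin> T"
    and card_T: "card T + x j = CARD('n) - 1"
    and T_top: "\<And>g e. g \<in> T \<Longrightarrow> e \<notin> insert j T \<Longrightarrow> x e \<le> x g"
begin

text \<open>pred is an SSM predecessor of x: adding a grain at j, toppling j onto T and the
  sink, and then the full vertices of T onto the sink leads back to x.\<close>
definition pred :: "'n \<Rightarrow> nat" where
  "pred w = (if w = j then CARD('n) - 1 else if w \<in> T \<and> x w < CARD('n) - 1 then x w - 1 else x w)"

definition rest :: "'n set" where
  "rest = - insert j T"

lemma card_rest: "card rest = x j"
proof -
  have "card rest = CARD('n) - (card T + 1)"
    using j_notin_T by (simp add: rest_def Compl_eq_Diff_UNIV card_Diff_subset)
  then show ?thesis using card_T by simp
qed

lemma slack_if_rest_subset: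
  assumes "rest \<subseteq> A" "j \<notin> A"
  shows "(card A choose 2) + card (A \<inter> T) \<le> sum x A"
proof -
  have "A = (A \<inter> T) \<union> rest" "(A \<inter> T) \<inter> rest = {}" using assms by (auto simp: rest_def)
  then have "card A = card (A \<inter> T) + x j" using card_rest by (metis card_Un_disjoint finite)
  moreover have "card (insert j A) choose 2 \<le> sum x (insert j A)"
    using subset_sums by (simp add: subset_sums_ge_choose2_def del: card.insert)
  ultimately show ?thesis using assms(2) by (simp add: Suc_choose_two)
qed

lemma slack_insert:
  assumes "(card (insert e A) choose 2) + card (insert e A \<inter> T) \<le> sum x (insert e A)"
    and "e \<notin> A" "e \<notin> T" "x e \<le> card A"
  shows "(card A choose 2) + card (A \<inter> T) \<le> sum x A"
  using assms by (simp add: Suc_choose_two)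

lemma slack_remove:
  assumes "(card (A - {g}) choose 2) + card ((A - {g}) \<inter> T) \<le> sum x (A - {g})"
    and "g \<in> A" "g \<in> T" "card A \<le> x g"
  shows "(card A choose 2) + card (A \<inter> T) \<le> sum x A"
proof -
  have "(A - {g}) \<inter> T = (A \<inter> T) - {g}" by blast
  then have "card (A \<inter> T) = Suc (card ((A - {g}) \<inter> T))"
    using assms(2,3) card_Suc_Diff1[of "A \<inter> T" g] by simp
  moreover have "card A = Suc (card (A - {g}))" using assms(2) by (metis card_Suc_Diff1 finite)
  moreover have "sum x A = x g + sum x (A - {g})" using assms(2) by (simp add: sum.remove)
  ultimately show ?thesis using assms(1,4) by (simp add: Suc_choose_two)
qed

lemma subset_sum_slack:
  "j \<notin> A \<Longrightarrow> (card A choose 2) + card (A \<inter> T) \<le> sum x A"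
proof (induction "card (A \<inter> T) + card (rest - A)" arbitrary: A rule: less_induct)
  case less
  show ?case
  proof (cases "rest \<subseteq> A")
    case True
    then show ?thesis using less.prems by (rule slack_if_rest_subset)
  next
    case False
    then obtain e where e: "e \<in> rest" "e \<notin> A" by blast
    then have "e \<notin> T" "e \<noteq> j" by (auto simp: rest_def)
    consider "x e \<le> card A" | "A \<inter> T = {}" | g where "g \<in> A" "g \<in> T" "card A < x e"
      by force
    then show ?thesis
    proof cases
      case 1
      have "card (rest - insert e A) < card (rest - A)" using e by (intro psubset_card_mono) auto
      then have "(card (insert e A) choose 2) + card (insert e A \<inter> T) \<le> sum x (insert e A)"
        using less.hyps[of "insert e A"] less.prems \<open>e \<notin> T\<close> \<open>e \<noteq> j\<close> by simp
      then show ?thesis using e(2) \<open>e \<notin> T\<close> 1 by (rule slack_insert)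
    next
      case 2
      then show ?thesis using subset_sums by (simp add: subset_sums_ge_choose2_def)
    next
      case 3
      have "card ((A - {g}) \<inter> T) < card (A \<inter> T)" using 3 by (intro psubset_card_mono) auto
      moreover have "rest - (A - {g}) = rest - A" using 3 by (auto simp: rest_def)
      ultimately have "(card (A - {g}) choose 2) + card ((A - {g}) \<inter> T) \<le> sum x (A - {g})"
        using less.hyps[of "A - {g}"] less.prems by auto
      moreover have "e \<notin> insert j T" using e by (simp add: rest_def)
      then have "card A \<le> x g" using 3 T_top[of g e] by linarith
      ultimately show ?thesis by (rule slack_remove[OF _ 3(1,2)])
    qed
  qed
qed

lemma T_pos: "g \<in> T \<Longrightarrow> 1 \<le> x g"
  using subset_sum_slack[of "{g}"] j_notin_T by (auto simp: numeral_2_eq_2)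

lemma x_le_pred: "w \<noteq> j \<Longrightarrow> x w \<le> pred w + (if w \<in> T then 1 else 0)"
  by (auto simp: pred_def)

lemma stable_pred: "stable pred"
  using stable by (auto simp: stable_def pred_def le_diff_conv2 intro: le_trans[OF diff_le_self])

lemma subset_sums_pred: "subset_sums_ge_choose2 pred"
  unfolding subset_sums_ge_choose2_def
proof
  fix A
  have x_le: "sum x A \<le> sum pred A + card (A \<inter> T)" if "j \<notin> A" for A
  proof -
    have "sum x A \<le> (\<Sum>w\<in>A. pred w + (if w \<in> T then 1 else 0))"
      using that x_le_pred by (intro sum_mono) (metis)
    then show ?thesis by (simp add: sum.distrib sum.If_cases Int_commute)
  qed
  show "card A choose 2 \<le> sum pred A"
  proof (cases "j \<in> A")
    case False
    then show ?thesis using subset_sum_slack x_le by fastforce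
  next
    case True
    have "card ((A - {j}) \<inter> T) \<le> card T" by (rule card_mono) auto
    moreover have "sum x A = x j + sum x (A - {j})" "sum pred A = pred j + sum pred (A - {j})"
      using True by (simp_all add: sum.remove)
    moreover have "card A choose 2 \<le> sum x A"
      using subset_sums by (simp add: subset_sums_ge_choose2_def)
    moreover have "pred j = CARD('n) - 1" by (simp add: pred_def)
    moreover have "sum x (A - {j}) \<le> sum pred (A - {j}) + card ((A - {j}) \<inter> T)"
      by (rule x_le) simp
    ultimately show ?thesis using card_T by linarith
  qed
qed

text \<open>j gains 2 d x j + d^2 in the sum of squares, d = |T|, while each vertex of T
  loses less than 2 x j, as its value is at most x j.\<close>
lemma sum_sq_less_pred: "sum_sq x < sum_sq pred"
proof -
  define d where "d = card T"
  have d: "1 \<le> d" using card_T x_j_less by (simp add: d_def)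
  have pointwise: "x w ^ 2 + (if w = j then 2 * x j * d + d ^ 2 else 0)
      \<le> pred w ^ 2 + (if w \<in> T then 2 * x j else 0)" for w
  proof -
    consider "w = j" | "w \<in> T" "x w < CARD('n) - 1" | "w \<noteq> j" "\<not> (w \<in> T \<and> x w < CARD('n) - 1)"
      by blast
    then show ?thesis
    proof cases
      case 1
      have "pred j = x j + d" using card_T by (simp add: pred_def d_def)
      then show ?thesis using 1 j_notin_T by (simp add: power2_sum)
    next
      case 2
      then obtain a where a: "x w = Suc a" using T_pos by (metis Suc_le_D One_nat_def)
      then have "a + 1 \<le> x j" using x_j_max 2 by fastforce
      then show ?thesis using 2 a j_notin_T by (auto simp: pred_def power2_eq_square)
    next
      case 3
      then show ?thesis by (auto simp: pred_def)
    qed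
  qed
  have "(\<Sum>w\<in>UNIV. x w ^ 2 + (if w = j then 2 * x j * d + d ^ 2 else 0))
      \<le> (\<Sum>w\<in>UNIV. pred w ^ 2 + (if w \<in> T then 2 * x j else 0))"
    using pointwise by (rule sum_mono)
  then have "sum_sq x + 2 * x j * d + d ^ 2 \<le> sum_sq pred + 2 * x j * d"
    by (simp add: sum_sq_def sum.distrib sum.If_cases d_def)
  moreover have "0 < d ^ 2" using d by simp
  ultimately show ?thesis by linarith
qed

lemma ssm_trans_pred:
  assumes "0 < p" "p < 1" "0 < \<mu> j"
  shows "ssm_trans p \<mu> pred x"
proof -
  define c where "c = add_grain j pred"
  have c_j: "c j = CARD('n)"
    using zero_less_card_finite[where 'a='n] by (simp add: c_def add_grain_def pred_def)
  define c1 where "c1 = (\<lambda>w. if w = j then c j - (card T + 1) else if w \<in> T then c w + 1 else c w)"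
  have topple: "ssm_topple p j c c1"
    unfolding c1_def using assms c_j j_notin_T by (intro ssm_toppleI) auto
  define K where "K = {w \<in> T. x w = CARD('n) - 1}"
  have "(ssm_step p)\<^sup>*\<^sup>* c1 (\<lambda>w. if w \<in> K then CARD('n) - 1 else c1 w)"
    using assms j_notin_T zero_less_card_finite[where 'a='n]
    by (intro ssm_steps_topple_to_sink) (auto simp: K_def c1_def c_def add_grain_def pred_def)
  also have "(\<lambda>w. if w \<in> K then CARD('n) - 1 else c1 w) = x"
  proof
    fix w
    have "x w \<le> CARD('n) - 1" using stable by (simp add: stable_def)
    then show "(if w \<in> K then CARD('n) - 1 else c1 w) = x w"
      using c_j card_T T_pos[of w] j_notin_T
      by (auto simp: K_def c1_def c_def add_grain_def pred_def)
  qed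
  finally have "(ssm_step p)\<^sup>*\<^sup>* c x" by (rule ssm_topple_rtranclp[OF topple])
  then show ?thesis
    using assms stable stable_pred by (auto simp: ssm_trans_def ssm_stab_def c_def)
qed

end

lemma ssm_predecessor_exists:
  fixes x :: "'n::finite \<Rightarrow> nat"
  assumes "stable x" "subset_sums_ge_choose2 x" "x \<noteq> max_stable"
  obtains j T where "ssm_predecessor x j T"
proof -
  define L where "L = {w. x w < CARD('n) - 1}"
  obtain w where "x w \<noteq> CARD('n) - 1"
    using assms(3) unfolding max_stable_def fun_eq_iff by blast
  moreover have "x w \<le> CARD('n) - 1" using assms(1) by (simp add: stable_def)
  ultimately have "w \<in> L" unfolding L_def mem_Collect_eq by linarith
  then have "Max (x ` L) \<in> x ` L" by (intro Max_in) auto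
  then obtain j where j: "j \<in> L" "x j = Max (x ` L)" by auto
  have k_le: "CARD('n) - 1 - x j \<le> card (UNIV - {j})" by (simp add: card_Diff_singleton)
  obtain T where T: "T \<subseteq> UNIV - {j}" "card T = CARD('n) - 1 - x j"
      "\<And>g e. g \<in> T \<Longrightarrow> e \<in> (UNIV - {j}) - T \<Longrightarrow> x e \<le> x g"
    by (rule obtain_top_subset[OF finite k_le, of x]) auto
  have "ssm_predecessor x j T"
    using assms(1,2) j T by unfold_locales (auto simp: L_def)
  then show ?thesis by (rule that)
qed

lemma stable_sum_sq_induct [consumes 1, case_names step]:
  fixes c :: "'n::finite \<Rightarrow> nat"
  assumes "stable c"
    and step: "\<And>c. stable c \<Longrightarrow> (\<And>d. stable d \<Longrightarrow> sum_sq c < sum_sq d \<Longrightarrow> P d) \<Longrightarrow> P c"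
  shows "P c"
proof -
  have bound: "sum_sq d \<le> CARD('n) * (CARD('n) - 1) ^ 2" if "stable d" for d :: "'n \<Rightarrow> nat"
    using sum_bounded_above[of UNIV "\<lambda>w. d w ^ 2" "(CARD('n) - 1) ^ 2"] that
    by (auto simp: sum_sq_def stable_def intro: power_mono)
  show ?thesis using assms(1)
  proof (induction "CARD('n) * (CARD('n) - 1) ^ 2 - sum_sq c" arbitrary: c rule: less_induct)
    case less
    show ?case using less.prems
    proof (rule step)
      fix d :: "'n \<Rightarrow> nat"
      assume "stable d" "sum_sq c < sum_sq d"
      then show "P d" using less.hyps bound[of d] by (meson diff_less_mono2 order_less_le_trans)
    qed
  qed
qed

lemma ssm_trans_from_max_stable:
  assumes p: "0 < p" "p < 1" and \<mu>: "\<forall>i. 0 < \<mu> i"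
  shows "stable x \<Longrightarrow> subset_sums_ge_choose2 x \<Longrightarrow> (ssm_trans p \<mu>)\<^sup>*\<^sup>* max_stable x"
proof (induction x rule: stable_sum_sq_induct)
  case (step x)
  show ?case
  proof (cases "x = max_stable")
    case False
    with step.prems step.hyps obtain j T where "ssm_predecessor x j T"
      by (blast elim: ssm_predecessor_exists)
    then interpret ssm_predecessor x j T .
    have "(ssm_trans p \<mu>)\<^sup>*\<^sup>* max_stable pred"
      using step.IH stable_pred subset_sums_pred sum_sq_less_pred by blast
    then show ?thesis using ssm_trans_pred p \<mu> by (meson rtranclp.rtrancl_into_rtrancl)
  qed simp
qed

lemma SR_iff:
  assumes "0 < p" "p < 1" "\<forall>i. 0 < \<mu> i"
  shows "SR p \<mu> c \<longleftrightarrow> stable c \<and> subset_sums_ge_choose2 c"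
  using SR_iff_reachable[OF assms] ssm_trans_from_max_stable[OF assms]
    subset_sums_ge_choose2_ssm_trans subset_sums_ge_choose2_max_stable
  by blast

section \<open>Convex decomposition along a forbidden subconfiguration\<close>

lemma stable_comp:
  fixes c :: "'n::finite \<Rightarrow> nat" and s :: "'n \<Rightarrow> 'n"
  shows "stable c \<Longrightarrow> stable (c \<circ> s)"
  by (simp add: stable_def)

lemma level_comp_permutes: "s permutes UNIV \<Longrightarrow> level (c \<circ> s) = level c"
  by (simp only: level_def sum.permute[of s UNIV c, symmetric])

lemma sum_sq_comp_permutes: "s permutes UNIV \<Longrightarrow> sum_sq (c \<circ> s) = sum_sq c"
  using sum.permute[of s UNIV "\<lambda>w. c w ^ 2"] by (simp add: sum_sq_def comp_def)

lemma subset_sums_ge_choose2_comp_permutes: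
  assumes "subset_sums_ge_choose2 c" "s permutes UNIV"
  shows "subset_sums_ge_choose2 (c \<circ> s)"
  unfolding subset_sums_ge_choose2_def
proof
  fix A
  have "inj_on s A" using assms(2) by (rule permutes_inj_on)
  then have "sum (c \<circ> s) A = sum c (s ` A)" "card (s ` A) = card A"
    by (simp_all add: sum.reindex card_image)
  then show "card A choose 2 \<le> sum (c \<circ> s) A"
    using assms(1) unfolding subset_sums_ge_choose2_def by metis
qed

lemma tight_subset_inside:
  assumes "subset_sums_ge_choose2 c" "sum c B \<le> card B choose 2" "u \<in> B"
  shows "c u < card B"
proof -
  have "card B = Suc (card (B - {u}))" using assms(3) by (metis card_Suc_Diff1 finite)
  moreover have "sum c B = c u + sum c (B - {u})" using assms(3) by (simp add: sum.remove)
  moreover have "card (B - {u}) choose 2 \<le> sum c (B - {u})"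
    using assms(1) unfolding subset_sums_ge_choose2_def by blast
  ultimately show ?thesis using assms(2) by (simp add: Suc_choose_two)
qed

lemma tight_subset_outside:
  assumes "subset_sums_ge_choose2 c" "sum c B \<le> card B choose 2" "w \<notin> B"
  shows "card B \<le> c w"
proof -
  have "card (insert w B) choose 2 \<le> sum c (insert w B)"
    using assms(1) unfolding subset_sums_ge_choose2_def by blast
  then show ?thesis using assms(2,3) by (simp add: Suc_choose_two)
qed

text \<open>u and v are the two fullest vertices of a forbidden set A. A tight set containing u
  but not v would contain all of A - {v} and have at most c v < |A| - 1 elements.\<close>
lemma exists_movable_pair:
  fixes c :: "'n::finite \<Rightarrow> nat"
  assumes c: "subset_sums_ge_choose2 c" and forbidden: "\<not> no_forbidden_subconfig c"
  obtains u v where "u \<noteq> v" "c u \<le> c v" "1 \<le> c u" "c v + 1 \<le> CARD('n) - 1"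
    "\<And>B. u \<in> B \<Longrightarrow> v \<notin> B \<Longrightarrow> card B choose 2 < sum c B"
proof -
  obtain A where "A \<noteq> {}" and A: "\<forall>w\<in>A. c w + 1 < card A"
    using forbidden unfolding no_forbidden_subconfig_def by (auto simp: not_le)
  then have "Max (c ` A) \<in> c ` A" by (intro Max_in) auto
  then obtain v where "v \<in> A" "c v = Max (c ` A)" by (metis imageE)
  then have v: "v \<in> A" "\<And>w. w \<in> A \<Longrightarrow> c w \<le> c v" by simp_all
  then have "card (A - {v}) \<noteq> 0" using A by auto
  then have "Max (c ` (A - {v})) \<in> c ` (A - {v})" by (intro Max_in) auto
  then obtain u where "u \<in> A - {v}" "c u = Max (c ` (A - {v}))" by (metis imageE)
  then have u: "u \<in> A - {v}" "\<And>w. w \<in> A - {v} \<Longrightarrow> c w \<le> c u" by simp_all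
  have slack: "card B choose 2 < sum c B" if B: "u \<in> B" "v \<notin> B" for B
  proof (rule ccontr)
    assume "\<not> card B choose 2 < sum c B"
    then have tight: "sum c B \<le> card B choose 2" by simp
    have "A - {v} \<subseteq> B"
    proof
      fix w assume "w \<in> A - {v}"
      then have "c w < card B" using u tight_subset_inside[OF c tight B(1)] by fastforce
      then show "w \<in> B" using tight_subset_outside[OF c tight] by (meson not_le)
    qed
    then have "card A \<le> card B + 1" using card_mono[of B "A - {v}"] v(1) by simp
    then show False using A v tight_subset_outside[OF c tight B(2)] by fastforce
  qed
  have "1 \<le> c u" using slack[of "{u}"] u by (auto simp: numeral_2_eq_2)
  moreover have "c v + 1 \<le> CARD('n) - 1" using A v card_mono[of UNIV A] by fastforce
  ultimately show ?thesis using that u v slack by blast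
qed

lemma to_vec_nth [simp]: "to_vec c $ i = real (c i)"
  by (simp add: to_vec_def)

definition move_grain :: "'n \<Rightarrow> 'n \<Rightarrow> ('n \<Rightarrow> nat) \<Rightarrow> ('n \<Rightarrow> nat)" where
  "move_grain u v c = (c(u := c u - 1))(v := c v + 1)"

context
  fixes c :: "'n::finite \<Rightarrow> nat" and u v :: 'n
  assumes uv: "u \<noteq> v" "1 \<le> c u"
begin

lemma sum_move_grain:
  "sum (move_grain u v c) B + (if u \<in> B then 1 else 0) = sum c B + (if v \<in> B then 1 else 0)"
proof -
  have "move_grain u v c w + (if w = u then 1 else 0) = c w + (if w = v then 1 else 0)" for w
    using uv by (auto simp: move_grain_def)
  then have "(\<Sum>w\<in>B. move_grain u v c w + (if w = u then 1 else 0))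
      = (\<Sum>w\<in>B. c w + (if w = v then 1 else 0))"
    by (simp only:)
  then show ?thesis by (simp add: sum.distrib)
qed

lemma level_move_grain: "level (move_grain u v c) = level c"
  using sum_move_grain[of UNIV] by (simp add: level_def)

lemma stable_move_grain: "stable c \<Longrightarrow> c v + 1 \<le> CARD('n) - 1 \<Longrightarrow> stable (move_grain u v c)"
  by (auto simp: stable_def move_grain_def intro: le_trans[OF diff_le_self])

lemma subset_sums_ge_choose2_move_grain:
  assumes "subset_sums_ge_choose2 c" "\<And>B. u \<in> B \<Longrightarrow> v \<notin> B \<Longrightarrow> card B choose 2 < sum c B"
  shows "subset_sums_ge_choose2 (move_grain u v c)"
  unfolding subset_sums_ge_choose2_def
proof
  fix B
  have "card B choose 2 \<le> sum c B" using assms(1) by (simp add: subset_sums_ge_choose2_def)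
  then show "card B choose 2 \<le> sum (move_grain u v c) B"
    using sum_move_grain[of B] assms(2)[of B] by (auto split: if_splits)
qed

lemma sum_sq_move_grain: "c u \<le> c v \<Longrightarrow> sum_sq c < sum_sq (move_grain u v c)"
proof -
  assume "c u \<le> c v"
  have "move_grain u v c w ^ 2 + (if w = u then 2 * c u - 1 else 0)
      = c w ^ 2 + (if w = v then 2 * c v + 1 else 0)" for w
    using uv by (cases "c u") (auto simp: move_grain_def power2_eq_square)
  then have "(\<Sum>w\<in>UNIV. move_grain u v c w ^ 2 + (if w = u then 2 * c u - 1 else 0))
      = (\<Sum>w\<in>UNIV. c w ^ 2 + (if w = v then 2 * c v + 1 else 0))"
    by (simp only:)
  then have "sum_sq (move_grain u v c) + (2 * c u - 1) = sum_sq c + (2 * c v + 1)"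
    by (simp add: sum_sq_def sum.distrib)
  then show ?thesis using \<open>c u \<le> c v\<close> by linarith
qed

lemma to_vec_in_segment_move_grain:
  assumes "c u \<le> c v"
  shows "to_vec c \<in> closed_segment (to_vec (move_grain u v c))
    (to_vec (move_grain u v c \<circ> Transposition.transpose u v))"
proof -
  define a b where "a = real (c u)" and "b = real (c v)"
  define t where "t = 1 / (b - a + 2)"
  have "a \<le> b" "1 \<le> a" using assms uv(2) by (simp_all add: a_def b_def)
  then have t: "0 \<le> t" "t \<le> 1" "t * (b - a + 2) = 1" by (simp_all add: t_def)
  have "to_vec c $ w = (1 - t) * to_vec (move_grain u v c) $ w
      + t * to_vec (move_grain u v c \<circ> Transposition.transpose u v) $ w" for w
  proof -
    consider "w = u" | "w = v" | "w \<noteq> u" "w \<noteq> v" by blast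
    then show ?thesis
    proof cases
      case 1
      then have "(1 - t) * (a - 1) + t * (1 + b) = a" using t(3) by (simp add: algebra_simps)
      then show ?thesis using 1 uv by (simp add: move_grain_def a_def b_def of_nat_diff)
    next
      case 2
      then have "(1 - t) * (1 + b) + t * (a - 1) = b" using t(3) by (simp add: algebra_simps)
      then show ?thesis using 2 uv by (simp add: move_grain_def a_def b_def of_nat_diff)
    next
      case 3
      then show ?thesis by (simp add: move_grain_def algebra_simps)
    qed
  qed
  then have "to_vec c = (1 - t) *\<^sub>R to_vec (move_grain u v c)
      + t *\<^sub>R to_vec (move_grain u v c \<circ> Transposition.transpose u v)"
    by (simp add: vec_eq_iff)
  with t show ?thesis unfolding in_segment by blast
qed

end

lemma to_vec_in_convex_hull_no_forbidden_subconfig: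
  fixes c :: "'n::finite \<Rightarrow> nat"
  shows "stable c \<Longrightarrow> subset_sums_ge_choose2 c \<Longrightarrow>
    to_vec c \<in> convex hull (to_vec ` {d. stable d \<and> no_forbidden_subconfig d \<and> level d = level c})"
proof (induction c rule: stable_sum_sq_induct)
  case (step c)
  let ?H = "convex hull (to_vec ` {d. stable d \<and> no_forbidden_subconfig d \<and> level d = level c})"
  show ?case
  proof (cases "no_forbidden_subconfig c")
    case True
    then show ?thesis using step.hyps by (intro hull_inc) blast
  next
    case False
    with step.prems obtain u v where uv: "u \<noteq> v" "c u \<le> c v" "1 \<le> c u" "c v + 1 \<le> CARD('n) - 1"
        and slack: "\<And>B. u \<in> B \<Longrightarrow> v \<notin> B \<Longrightarrow> card B choose 2 < sum c B"
      by (rule exists_movable_pair) blast+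
    define c' where "c' = move_grain u v c"
    define c'' where "c'' = c' \<circ> Transposition.transpose u v"
    have perm: "Transposition.transpose u v permutes UNIV" by (simp add: permutes_swap_id)
    have c': "stable c'" "subset_sums_ge_choose2 c'" "level c' = level c" "sum_sq c < sum_sq c'"
      using uv slack step.hyps step.prems
      by (simp_all add: c'_def stable_move_grain subset_sums_ge_choose2_move_grain
          level_move_grain sum_sq_move_grain)
    then have c'': "stable c''" "subset_sums_ge_choose2 c''" "level c'' = level c"
        "sum_sq c < sum_sq c''"
      using perm by (simp_all add: c''_def stable_comp subset_sums_ge_choose2_comp_permutes
          level_comp_permutes sum_sq_comp_permutes)
    have "to_vec c' \<in> ?H" using step.IH[of c'] c' by simp
    moreover have "to_vec c'' \<in> ?H" using step.IH[of c''] c'' by simp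
    ultimately have "closed_segment (to_vec c') (to_vec c'') \<subseteq> ?H"
      by (rule closed_segment_subset_convex_hull)
    then show ?thesis
      using to_vec_in_segment_move_grain uv unfolding c'_def c''_def by blast
  qed
qed

section \<open>Lattice points of the SR polytope\<close>

lemma level_eq_int_iff:
  fixes c :: "'n::finite \<Rightarrow> nat"
  shows "level c = int k \<longleftrightarrow> sum c UNIV = (CARD('n) choose 2) + k"
  unfolding level_def by linarith

definition sr_polytope :: "nat \<Rightarrow> (real ^ 'n::finite) set" where
  "sr_polytope s = {x. (\<forall>i. 0 \<le> x $ i \<and> x $ i \<le> real (CARD('n) - 1))
      \<and> (\<forall>A. real (card A choose 2) \<le> (\<Sum>i\<in>A. x $ i)) \<and> (\<Sum>i\<in>UNIV. x $ i) = real s}"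

lemma convex_sr_polytope: "convex (sr_polytope s :: (real ^ 'n::finite) set)"
proof -
  have linear: "linear (\<lambda>x :: real ^ 'n. \<Sum>i\<in>A. x $ i)" for A
    by (intro linear_compose_sum ballI bounded_linear.linear[OF bounded_linear_vec_nth])
  have "(sr_polytope s :: (real ^ 'n) set) = (\<Inter>i. (\<lambda>x. \<Sum>j\<in>{i}. x $ j) -` {0..real (CARD('n) - 1)})
      \<inter> (\<Inter>A. (\<lambda>x. \<Sum>i\<in>A. x $ i) -` {real (card A choose 2)..})
      \<inter> (\<lambda>x. \<Sum>i\<in>UNIV. x $ i) -` {real s}"
    by (auto simp: sr_polytope_def)
  then show ?thesis
    by (simp only:) (intro convex_Int convex_INT convex_linear_vimage linear; simp)
qed

lemma to_vec_in_sr_polytope_iff: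
  "to_vec c \<in> sr_polytope s \<longleftrightarrow> stable c \<and> subset_sums_ge_choose2 c \<and> sum c UNIV = s"
  unfolding sr_polytope_def stable_def subset_sums_ge_choose2_def to_vec_def
  by (simp add: of_nat_sum[symmetric] del: of_nat_sum of_nat_diff)

lemma lattice_points_sr_polytope:
  "{x \<in> sr_polytope s. \<forall>i. x $ i \<in> \<int>}
    = to_vec ` {c :: 'n::finite \<Rightarrow> nat. stable c \<and> subset_sums_ge_choose2 c \<and> sum c UNIV = s}"
proof (intro equalityI subsetI)
  fix x :: "real ^ 'n"
  assume x: "x \<in> {x \<in> sr_polytope s. \<forall>i. x $ i \<in> \<int>}"
  define c where "c i = nat \<lfloor>x $ i\<rfloor>" for i
  have "real (c i) = x $ i" for i
    using x by (auto simp: c_def sr_polytope_def elim!: Ints_cases)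
  then have "x = to_vec c" by (simp add: vec_eq_iff)
  with x to_vec_in_sr_polytope_iff show "x \<in> to_vec ` {c. stable c \<and> subset_sums_ge_choose2 c \<and> sum c UNIV = s}"
    by blast
qed (auto simp: to_vec_in_sr_polytope_iff)

lemma convex_hull_DR_subset_sr_polytope:
  assumes "\<forall>i. 0 < \<mu> i"
  shows "convex hull (to_vec ` {c :: 'n::finite \<Rightarrow> nat. DR \<mu> c \<and> level c = int k})
    \<subseteq> sr_polytope ((CARD('n) choose 2) + k)"
proof (rule hull_minimal)
  show "to_vec ` {c. DR \<mu> c \<and> level c = int k} \<subseteq> sr_polytope ((CARD('n) choose 2) + k)"
    using DR_imp_subset_sums_ge_choose2[OF assms]
    by (auto simp: to_vec_in_sr_polytope_iff DR_def level_eq_int_iff)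
qed (rule convex_sr_polytope)

lemma to_vec_in_convex_hull_DR:
  fixes c :: "'n::finite \<Rightarrow> nat"
  assumes "\<forall>i. 0 < \<mu> i" "stable c" "subset_sums_ge_choose2 c" "level c = l"
  shows "to_vec c \<in> convex hull (to_vec ` {d. DR \<mu> d \<and> level d = l})"
proof -
  have "{d. stable d \<and> no_forbidden_subconfig d \<and> level d = l} \<subseteq> {d. DR \<mu> d \<and> level d = l}"
    using DR_if_no_forbidden_subconfig[OF assms(1)] by blast
  then have "convex hull (to_vec ` {d. stable d \<and> no_forbidden_subconfig d \<and> level d = l})
      \<subseteq> convex hull (to_vec ` {d. DR \<mu> d \<and> level d = l})"
    by (intro hull_mono image_mono)
  then show ?thesis using to_vec_in_convex_hull_no_forbidden_subconfig[OF assms(2,3)] assms(4) by blast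
qed

theorem mainTheorem11:
  fixes p :: real and \<mu> :: "'n::finite \<Rightarrow> real" and k :: nat
  assumes "0 < p" and "p < 1" and "\<forall>i. \<mu> i > 0"
  shows "to_vec ` {c. SR p \<mu> c \<and> level c = int k} =
    {x :: real ^ 'n. (\<forall>i. x $ i \<in> \<int>) \<and>
        x \<in> convex hull (to_vec ` {c. DR \<mu> c \<and> level c = int k})}"
proof -
  let ?C = "{c :: 'n \<Rightarrow> nat. stable c \<and> subset_sums_ge_choose2 c \<and> sum c UNIV = (CARD('n) choose 2) + k}"
  let ?D = "convex hull (to_vec ` {c. DR \<mu> c \<and> level c = int k})"
  have "{c. SR p \<mu> c \<and> level c = int k} = ?C"
    using SR_iff[OF assms] level_eq_int_iff by blast
  moreover have "to_vec ` ?C \<subseteq> ?D"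
    using to_vec_in_convex_hull_DR[OF assms(3), where l = "int k"] by (auto simp: level_eq_int_iff)
  moreover have "?D \<subseteq> sr_polytope ((CARD('n) choose 2) + k)"
    using assms(3) by (rule convex_hull_DR_subset_sr_polytope)
  moreover have "{x \<in> sr_polytope ((CARD('n) choose 2) + k). \<forall>i. x $ i \<in> \<int>} = to_vec ` ?C"
    by (rule lattice_points_sr_polytope)
  ultimately show ?thesis by auto
qed

end
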